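(* Let $\mathcal V$ be a vector space partition of $\mathbb F_2^8$ such that $\dim(V)$ is even for all $V\in\mathcal V$. Then $\mathcal V$ has one of the types $[8^1]$, $[2^{64},6^1]$, or $[2^{5i},4^{17-i}]$ for some $0\le i\le17$. Moreover, vector space partitions of $\mathbb F_2^8$ of each of these types exist.
   Context: A vector space partition of $\mathbb F_2^n$ is a set of nonzero subspaces such that every nonzero vector lies in exactly one of them. It has type $[d_1^{n_1},\dots,d_k^{n_k}]$ (with $d_1<\dots<d_k$) if it contains exactly $n_i$ subspaces of dimension $d_i$ and no others. *)

theory Defs
  imports "HOL-Analysis.Analysis" "HOL-Library.Z2"
begin

type_synonym F28 = "bit ^ 8"

definition vector_space_partition :: "F28 set set \<Rightarrow> bool" where
  "vector_space_partition P \<longleftrightarrow>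
     (\<forall>V\<in>P. vec.subspace V \<and> V \<noteq> {0}) \<and>
     (\<forall>v::F28. v \<noteq> 0 \<longrightarrow> (\<exists>!V. V \<in> P \<and> v \<in> V))"

definition num_dim :: "F28 set set \<Rightarrow> nat \<Rightarrow> nat" where
  "num_dim P d = card {V \<in> P. vec.dim V = d}"

text \<open>P has type [d_1^{n_1},...,d_k^{n_k}] iff num_dim P = t, where t d = n_i for d = d_i
and t d = 0 otherwise (members with n_i = 0 are simply absent).\<close>
definition has_type :: "F28 set set \<Rightarrow> (nat \<Rightarrow> nat) \<Rightarrow> bool" where
  "has_type P t \<longleftrightarrow> (\<forall>d. num_dim P d = t d)"

definition type_8 :: "nat \<Rightarrow> nat" where
  "type_8 d = (if d = 8 then 1 else 0)"

definition type_2_64_6_1 :: "nat \<Rightarrow> nat" where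
  "type_2_64_6_1 d = (if d = 2 then 64 else if d = 6 then 1 else 0)"

definition type_2_4 :: "nat \<Rightarrow> nat \<Rightarrow> nat" where
  "type_2_4 i d = (if d = 2 then 5 * i else if d = 4 then 17 - i else 0)"

end

(* Counting the 255 nonzero vectors gives 3 n2 + 15 n4 + 63 n6 + 255 n8 = 255, where nd is the
   number of members of dimension d. Distinct members U and W meet only in 0, so
   dim U + dim W <= 8: a member of dimension 6 is unique and excludes members of dimension 4,
   and the identity leaves exactly the three listed types.

   For existence, F_2^8 is identified with F_256 = F_2[X]/(X^8+X^4+X^3+X^2+1), in which X is
   primitive. The multiplicative cosets of the subfields F_16 and F_4 are subspaces of
   dimension 4 and 2, and each coset of F_16 is the union of five cosets of F_4; splitting i of
   the 17 cosets of F_16 gives [2^(5i), 4^(17-i)]. A 6-dimensional F_4-subspace together with the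
   64 cosets of F_4 outside it gives [2^64, 6^1]. *)

theory Submission
  imports Defs
begin

lemma UNIV_bit: "(UNIV :: bit set) = {0, 1}"
  using bit.exhaust by auto

instance bit :: finite
  by standard (simp add: UNIV_bit)

lemma CARD_bit: "CARD(bit) = 2"
  by (simp add: UNIV_bit)

lemma CARD_F28: "CARD(F28) = 256"
  by (simp add: CARD_bit)

lemma (in finite_dimensional_vector_space) card_span_independent:
  assumes "finite (UNIV :: 'a set)" "independent B"
  shows "card (span B) = CARD('a) ^ card B"
proof -
  have fin: "finite B" using assms(2) by (rule finiteI_independent)
  let ?comb = "\<lambda>u. \<Sum>v\<in>B. u v *s v"
  have "span B = ?comb ` (B \<rightarrow>\<^sub>E UNIV)"
  proof -
    have "?comb u = ?comb (restrict u B) \<and> restrict u B \<in> B \<rightarrow>\<^sub>E UNIV" for u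
      by (auto intro!: sum.cong)
    then show ?thesis unfolding span_finite[OF fin] by blast
  qed
  moreover have "inj_on ?comb (B \<rightarrow>\<^sub>E UNIV)"
  proof (rule inj_onI)
    fix u u' assume u: "u \<in> B \<rightarrow>\<^sub>E UNIV" and u': "u' \<in> B \<rightarrow>\<^sub>E UNIV"
      and eq: "?comb u = ?comb u'"
    have "(\<Sum>v\<in>B. (u v - u' v) *s v) = 0"
      using eq by (simp add: scale_left_diff_distrib sum_subtractf)
    then have "\<forall>v\<in>B. u v - u' v = 0"
      using assms(2) independent_explicit by metis
    then show "u = u'" using u u' by (auto simp: PiE_def extensional_def fun_eq_iff)
  qed
  ultimately show ?thesis using fin by (simp add: card_image card_PiE)
qed

lemma (in finite_dimensional_vector_space) card_subspace:
  assumes "finite (UNIV :: 'a set)" "subspace V"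
  shows "card V = CARD('a) ^ dim V"
proof -
  obtain B where "B \<subseteq> V" "independent B" "V \<subseteq> span B" "card B = dim V"
    using basis_exists by blast
  moreover from this have "span B = V" using assms(2) span_subspace by blast
  ultimately show ?thesis using card_span_independent[OF assms(1)] by metis
qed

lemma card_subspace_F28: "vec.subspace (V :: F28 set) \<Longrightarrow> card V = 2 ^ vec.dim V"
  using vec.card_subspace[of V] by (simp add: CARD_bit)

lemma dim_le_8: "vec.dim (V :: F28 set) \<le> 8"
  using vec.dim_subset[of V UNIV] vec_dim_card[where 'a = bit and 'n = 8] by simp

section \<open>Vector space partitions with members of even dimension\<close>

lemma vector_space_partition_subspace:
  "vector_space_partition P \<Longrightarrow> V \<in> P \<Longrightarrow> vec.subspace V"
  unfolding vector_space_partition_def by blast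

lemma vector_space_partition_dim_pos:
  assumes "vector_space_partition P" "V \<in> P"
  shows "0 < vec.dim V"
proof -
  have "V \<noteq> {0}" using assms unfolding vector_space_partition_def by blast
  moreover have "0 \<in> V" by (rule vec.subspace_0[OF vector_space_partition_subspace[OF assms]])
  ultimately have "\<not> V \<subseteq> {0}" by blast
  then show ?thesis by (metis vec.dim_eq_0 gr0I)
qed

lemma vector_space_partition_Int:
  assumes "vector_space_partition P" "U \<in> P" "W \<in> P" "U \<noteq> W"
  shows "U \<inter> W = {0}"
proof -
  have "x = 0" if "x \<in> U" "x \<in> W" for x
  proof (rule ccontr)
    assume "x \<noteq> 0"
    then have "\<exists>!V. V \<in> P \<and> x \<in> V" using assms(1) unfolding vector_space_partition_def by blast
    then show False using that assms(2-4) by blast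
  qed
  moreover have "0 \<in> U" "0 \<in> W"
    using vec.subspace_0 vector_space_partition_subspace[OF assms(1)] assms(2,3) by auto
  ultimately show ?thesis by blast
qed

lemma vector_space_partition_dim_add_le:
  assumes "vector_space_partition P" "U \<in> P" "W \<in> P" "U \<noteq> W"
  shows "vec.dim U + vec.dim W \<le> 8"
proof -
  have "vec.dim U + vec.dim W = vec.dim {u + w |u w. u \<in> U \<and> w \<in> W} + vec.dim (U \<inter> W)"
    using vec.dim_sums_Int[OF vector_space_partition_subspace[OF assms(1,2)]
        vector_space_partition_subspace[OF assms(1,3)]] by simp
  also have "\<dots> = vec.dim {u + w |u w. u \<in> U \<and> w \<in> W}"
    using vector_space_partition_Int[OF assms] by simp
  also have "\<dots> \<le> 8" by (rule dim_le_8)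
  finally show ?thesis .
qed

lemma vector_space_partition_count:
  assumes "vector_space_partition P"
  shows "(\<Sum>V\<in>P. 2 ^ vec.dim V - 1) = (255::nat)"
proof -
  have "(\<Union>V\<in>P. V - {0}) = UNIV - {0}"
    using assms unfolding vector_space_partition_def by blast
  moreover have "card (\<Union>V\<in>P. V - {0}) = (\<Sum>V\<in>P. card (V - {0}))"
    by (rule card_UN_disjoint) (use vector_space_partition_Int[OF assms] in auto)
  moreover have "card (V - {0}) = 2 ^ vec.dim V - 1" if "V \<in> P" for V
    using card_subspace_F28 vector_space_partition_subspace[OF assms that]
      vec.subspace_0[OF vector_space_partition_subspace[OF assms that]] by simp
  ultimately show ?thesis using CARD_F28 by simp
qed

lemma even_partition_dim:
  assumes "vector_space_partition P" "\<forall>V\<in>P. even (vec.dim V)" "V \<in> P"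
  shows "vec.dim V \<in> {2, 4, 6, 8}"
proof -
  have "vec.dim V \<le> 8" by (rule dim_le_8)
  moreover have "0 < vec.dim V" "even (vec.dim V)"
    using assms vector_space_partition_dim_pos by auto
  ultimately show ?thesis by (auto elim!: evenE)
qed

lemma even_partition_count:
  assumes "vector_space_partition P" "\<forall>V\<in>P. even (vec.dim V)"
  shows "3 * num_dim P 2 + 15 * num_dim P 4 + 63 * num_dim P 6 + 255 * num_dim P 8 = 255"
proof -
  have "(255::nat) = (\<Sum>V\<in>P. 2 ^ vec.dim V - 1)"
    using vector_space_partition_count[OF assms(1)] by simp
  also have "\<dots> = (\<Sum>d\<in>{2, 4, 6, 8}. \<Sum>V\<in>{V\<in>P. vec.dim V = d}. 2 ^ vec.dim V - 1)"
    by (rule sum.group[symmetric]) (use even_partition_dim[OF assms] in auto)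
  also have "\<dots> = (\<Sum>d\<in>{2, 4, 6, 8::nat}. num_dim P d * (2 ^ d - 1))"
    unfolding num_dim_def by (intro sum.cong) auto
  finally show ?thesis by simp
qed

text \<open>The counting identity determines the number of members of dimension 2.\<close>

lemma even_partition_has_typeI:
  assumes "vector_space_partition P" "\<forall>V\<in>P. even (vec.dim V)"
    and "\<forall>d. d \<notin> {2, 4, 6, 8} \<longrightarrow> t d = 0"
    and "3 * t 2 + 15 * t 4 + 63 * t 6 + 255 * t 8 = 255"
    and "num_dim P 4 = t 4" "num_dim P 6 = t 6" "num_dim P 8 = t 8"
  shows "has_type P t"
  unfolding has_type_def
proof
  fix d
  show "num_dim P d = t d"
  proof (cases "d \<in> {2, 4, 6, 8}")
    case True
    then show ?thesis using even_partition_count[OF assms(1,2)] assms(4-) by auto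
  next
    case False
    then have "{V \<in> P. vec.dim V = d} = {}" using even_partition_dim[OF assms(1,2)] by auto
    then show ?thesis using False assms(3) by (simp add: num_dim_def)
  qed
qed

lemma even_partition_type:
  assumes P: "vector_space_partition P" and even: "\<forall>V\<in>P. even (vec.dim V)"
  shows "has_type P type_8 \<or> has_type P type_2_64_6_1 \<or> (\<exists>i\<le>17. has_type P (type_2_4 i))"
proof -
  note count = even_partition_count[OF P even]
  note has_typeI = even_partition_has_typeI[OF P even]
  show ?thesis
  proof (cases "num_dim P 8 = 0")
    case False
    then have "num_dim P 4 = 0" "num_dim P 6 = 0" "num_dim P 8 = 1" using count by auto
    then show ?thesis using has_typeI[of type_8] by (simp add: type_8_def)
  next
    case n8: True
    show ?thesis
    proof (cases "num_dim P 6 = 0")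
      case False
      then obtain U where U: "U \<in> P" "vec.dim U = 6"
        unfolding num_dim_def by (metis (mono_tags, lifting) card.empty empty_Collect_eq)
      have "vec.dim V \<le> 2" if "V \<in> P" "V \<noteq> U" for V
        using vector_space_partition_dim_add_le[OF P that(1) U(1) that(2)] U(2) by simp
      then have "{V \<in> P. vec.dim V = 6} = {U}" "{V \<in> P. vec.dim V = 4} = {}"
        using U by force+
      then have "num_dim P 4 = 0" "num_dim P 6 = 1" by (simp_all add: num_dim_def)
      then show ?thesis using n8 has_typeI[of type_2_64_6_1] by (simp add: type_2_64_6_1_def)
    next
      case n6: True
      then have "num_dim P 4 \<le> 17" using n8 count by simp
      then have "has_type P (type_2_4 (17 - num_dim P 4))"
        using n8 n6 has_typeI by (simp add: type_2_4_def)
      then show ?thesis by auto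
    qed
  qed
qed

section \<open>Binary codes of vectors\<close>

text \<open>A natural number codes the vector of its binary digits, so that xor is vector addition;
  \<open>lin_of_cols cs\<close> is the linear map whose \<open>i\<close>-th column is \<open>cs ! i\<close>.\<close>

definition xor_closed :: "nat set \<Rightarrow> bool" where
  "xor_closed A \<longleftrightarrow> 0 \<in> A \<and> (\<forall>x\<in>A. \<forall>y\<in>A. xor x y \<in> A)"

definition xor_linear :: "(nat \<Rightarrow> nat) \<Rightarrow> bool" where
  "xor_linear f \<longleftrightarrow> (\<forall>a b. f (xor a b) = xor (f a) (f b))"

fun lin_of_cols :: "nat list \<Rightarrow> nat \<Rightarrow> nat" where
  "lin_of_cols [] y = 0"
| "lin_of_cols (c # cs) y = xor (if odd y then c else 0) (lin_of_cols cs (y div 2))"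

definition xspan :: "nat list \<Rightarrow> nat set" where
  "xspan cs = lin_of_cols cs ` {..<2 ^ length cs}"

lemma xor_less_pow2: "(x::nat) < 2 ^ n \<Longrightarrow> y < 2 ^ n \<Longrightarrow> xor x y < 2 ^ n"
  by (metis take_bit_nat_eq_self_iff take_bit_xor)

lemma xor_linear_zero: "xor_linear f \<Longrightarrow> f 0 = 0"
  unfolding xor_linear_def by (metis xor_self_eq)

lemma xor_linear_funpow: "xor_linear f \<Longrightarrow> xor_linear (f ^^ k)"
  by (induction k) (auto simp: xor_linear_def)

lemma xor_linear_lin_of_cols: "xor_linear (lin_of_cols cs)"
  unfolding xor_linear_def
proof (induction cs)
  case (Cons c cs)
  have div2: "xor a b div 2 = xor (a div 2) (b div 2)" for a b :: nat
    using drop_bit_xor[of 1 a b] by (simp add: drop_bit_eq_div)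
  have cancel: "xor c (xor c x) = x" for x :: nat
    by (simp flip: xor.assoc)
  show ?case
  proof (intro allI)
    fix a b :: nat
    show "lin_of_cols (c # cs) (xor a b) = xor (lin_of_cols (c # cs) a) (lin_of_cols (c # cs) b)"
      by (cases "odd a"; cases "odd b")
        (simp_all add: div2 cancel even_xor_iff Cons.IH ac_simps xor.left_commute)
  qed
qed simp

lemma lin_of_cols_comp: "xor_linear f \<Longrightarrow> f (lin_of_cols cs y) = lin_of_cols (map f cs) y"
  by (induction cs arbitrary: y) (auto simp: xor_linear_def xor_linear_zero)

lemma lin_of_cols_less: "(\<forall>c\<in>set cs. c < 2 ^ n) \<Longrightarrow> lin_of_cols cs y < 2 ^ n"
  by (induction cs arbitrary: y) (auto intro: xor_less_pow2)

lemma lin_of_cols_mem: "xor_closed A \<Longrightarrow> set cs \<subseteq> A \<Longrightarrow> lin_of_cols cs y \<in> A"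
  by (induction cs arbitrary: y) (auto simp: xor_closed_def)

lemma xspan_less: "\<forall>c\<in>set cs. c < 2 ^ n \<Longrightarrow> xspan cs \<subseteq> {..<2 ^ n}"
  unfolding xspan_def using lin_of_cols_less by blast

lemma xor_closed_image: "xor_linear f \<Longrightarrow> xor_closed A \<Longrightarrow> xor_closed (f ` A)"
  unfolding xor_closed_def xor_linear_def by (auto simp: image_iff) (metis xor_self_eq)+

lemma xor_closed_xspan: "xor_closed (xspan cs)"
  unfolding xspan_def
  by (rule xor_closed_image[OF xor_linear_lin_of_cols]) (simp add: xor_closed_def xor_less_pow2)

lemma cols_subset_xspan: "set cs \<subseteq> xspan cs"
proof
  fix c assume "c \<in> set cs"
  then obtain i where i: "i < length cs" "c = cs ! i" by (metis in_set_conv_nth)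
  have "lin_of_cols cs (2 ^ i) = cs ! i" if "i < length cs" for cs i
    using that
  proof (induction cs arbitrary: i)
    case (Cons c cs)
    then show ?case by (cases i) (auto simp: xor_linear_zero[OF xor_linear_lin_of_cols])
  qed simp
  moreover have "2 ^ i < (2::nat) ^ length cs" using i by simp
  ultimately show "c \<in> xspan cs" using i unfolding xspan_def by (metis image_eqI lessThan_iff)
qed

lemma xspan_invariant:
  assumes "xor_linear f" "\<forall>c\<in>set cs. f c \<in> xspan cs" "x \<in> xspan cs"
  shows "f x \<in> xspan cs"
proof -
  obtain y where "x = lin_of_cols cs y" using assms(3) unfolding xspan_def by blast
  then have "f x = lin_of_cols (map f cs) y" using lin_of_cols_comp[OF assms(1)] by simp
  moreover have "set (map f cs) \<subseteq> xspan cs" using assms(2) by auto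
  ultimately show ?thesis using lin_of_cols_mem[OF xor_closed_xspan] by simp
qed

lemma card_xspan_le: "card (xspan cs) \<le> 2 ^ length cs"
  unfolding xspan_def using card_image_le[of "{..<2 ^ length cs :: nat}"] by simp

lemma card_xspan:
  assumes "\<forall>y\<in>{..<2 ^ length cs}. lin_of_cols cs y = 0 \<longrightarrow> y = 0"
  shows "card (xspan cs) = 2 ^ length cs"
proof -
  have "inj_on (lin_of_cols cs) {..<2 ^ length cs}"
  proof (rule inj_onI)
    fix a b assume a: "a \<in> {..<2 ^ length cs}" and b: "b \<in> {..<2 ^ length cs}"
      and eq: "lin_of_cols cs a = lin_of_cols cs b"
    have "lin_of_cols cs (xor a b) = 0"
      using xor_linear_lin_of_cols[unfolded xor_linear_def] eq by simp
    moreover have "xor a b \<in> {..<2 ^ length cs}" using a b by (simp add: xor_less_pow2)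
    ultimately have "xor a b = 0" using assms by blast
    then show "a = b" by (metis xor.assoc xor.right_neutral xor_self_eq)
  qed
  then show ?thesis unfolding xspan_def by (simp add: card_image)
qed

section \<open>The field with 256 elements\<close>

text \<open>Multiplication by \<open>X\<close> in \<open>F_2[X]/(X^8+X^4+X^3+X^2+1)\<close> on coefficient codes:
  \<open>X * X^7 = X^4+X^3+X^2+1\<close> is coded by 29.\<close>

definition mul_X :: "nat \<Rightarrow> nat" where
  "mul_X x = lin_of_cols [2, 4, 8, 16, 32, 64, 128, 29] x"

definition X_pow :: "nat \<Rightarrow> nat" where
  "X_pow k = (mul_X ^^ k) 1"

lemma xor_linear_mul_X: "xor_linear mul_X"
  using xor_linear_lin_of_cols unfolding xor_linear_def mul_X_def by blast

lemma xor_linear_mul_X_funpow: "xor_linear (mul_X ^^ k)"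
  by (rule xor_linear_funpow[OF xor_linear_mul_X])

lemma X_pow_add: "X_pow (a + b) = (mul_X ^^ a) (X_pow b)"
  by (simp add: X_pow_def funpow_add)

lemma X_pow_0: "X_pow 0 = 1"
  by (simp add: X_pow_def)

lemma X_pow_Suc: "X_pow (Suc k) = mul_X (X_pow k)"
  by (simp add: X_pow_def)

lemma X_pow_numeral: "X_pow (numeral k) = mul_X (X_pow (pred_numeral k))"
  by (simp add: numeral_eq_Suc X_pow_Suc)

lemmas X_pow_eval = X_pow_0 X_pow_Suc[of 0, simplified] X_pow_numeral mul_X_def

lemma X_pow_less: "X_pow k < 256"
proof (cases k)
  case (Suc n)
  have "mul_X (X_pow n) < 2 ^ 8" unfolding mul_X_def by (rule lin_of_cols_less) simp
  then show ?thesis using Suc by (simp add: X_pow_Suc)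
qed (simp add: X_pow_0)

lemma X_pow_periodic: "X_pow n = 1 \<Longrightarrow> X_pow (k + n * q) = X_pow k"
proof (induction q)
  case (Suc q)
  have "X_pow (k + n * Suc q) = (mul_X ^^ (k + n * q)) (X_pow n)"
    by (simp flip: X_pow_add add: algebra_simps)
  with Suc show ?case by (simp add: X_pow_def)
qed simp

lemma X_pow_mult_eq_1: "X_pow n = 1 \<Longrightarrow> X_pow (n * q) = 1"
  using X_pow_periodic[of n 0 q] by (simp add: X_pow_0)

lemma X_pow_gcd_eq_1: "X_pow a = 1 \<Longrightarrow> X_pow b = 1 \<Longrightarrow> X_pow (gcd a b) = 1"
proof (induction a b rule: gcd_nat_induct)
  case (step m n)
  have "X_pow (m mod n) = X_pow (m mod n + n * (m div n))"
    by (rule X_pow_periodic[OF step.prems(2), symmetric])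
  also have "\<dots> = 1" using step.prems(1) by simp
  finally show ?case using step by (simp add: gcd_non_0_nat)
qed simp

lemma proper_divisor_255:
  assumes "(d::nat) dvd 255" "d \<noteq> 255"
  shows "d dvd 85 \<or> d dvd 51 \<or> d dvd 15"
proof -
  obtain m where m: "255 = d * m" using assms(1) by blast
  then have "m \<noteq> 1" using assms(2) by auto
  then obtain p where p: "prime p" "p dvd m" using prime_factor_nat by blast
  have "m dvd 255" using m by (metis dvd_triv_right)
  then have "p dvd 3 * (5 * 17)" using p(2) dvd_trans by simp
  then have "p dvd 3 \<or> p dvd 5 \<or> p dvd 17" using p(1) by (simp only: prime_dvd_mult_iff)
  moreover have "prime (3::nat)" "prime (5::nat)" "prime (17::nat)" by simp_all
  ultimately have "p = 3 \<or> p = 5 \<or> p = 17" using p(1) by (metis primes_dvd_imp_eq)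
  moreover obtain m' where "m = p * m'" using p(2) by blast
  ultimately have "d * m' = 85 \<or> d * m' = 51 \<or> d * m' = 15" using m by auto
  then show ?thesis by (metis dvd_triv_left)
qed

lemma X_pow_255: "X_pow 255 = 1"
  by (simp add: X_pow_eval)

text \<open>\<open>X\<close> is primitive: its order divides \<open>255 = 3 * 5 * 17\<close> but none of \<open>255 / 3\<close>,
  \<open>255 / 5\<close> and \<open>255 / 17\<close>.\<close>

lemma X_pow_eq_1_iff: "X_pow k = 1 \<longleftrightarrow> 255 dvd k"
proof
  assume "X_pow k = 1"
  then have g: "X_pow (gcd k 255) = 1" using X_pow_gcd_eq_1 X_pow_255 by blast
  have "X_pow 85 \<noteq> 1" "X_pow 51 \<noteq> 1" "X_pow 15 \<noteq> 1" by (simp_all add: X_pow_eval)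
  then have "\<not> gcd k 255 dvd 85" "\<not> gcd k 255 dvd 51" "\<not> gcd k 255 dvd 15"
    using X_pow_mult_eq_1[OF g] by (auto elim!: dvdE)
  then have "gcd k 255 = 255" using proper_divisor_255 by blast
  then show "255 dvd k" by (metis gcd_dvd1)
next
  assume "255 dvd k"
  then show "X_pow k = 1" using X_pow_mult_eq_1[OF X_pow_255] by (auto elim!: dvdE)
qed

lemma X_pow_mod: "X_pow k = X_pow (k mod 255)"
  using X_pow_periodic[OF X_pow_255, of "k mod 255" "k div 255"] by simp

lemma X_pow_inj: "inj_on X_pow {..<255}"
proof -
  have neq: "X_pow a \<noteq> X_pow b" if "a < b" "b < 255" for a b
  proof
    assume "X_pow a = X_pow b"
    then have "X_pow ((255 - b) + a) = X_pow ((255 - b) + b)" by (simp only: X_pow_add)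
    also have "\<dots> = 1" using that X_pow_255 by simp
    finally have "255 dvd (255 - b) + a" by (simp only: X_pow_eq_1_iff)
    then show False using that by (simp add: nat_dvd_not_less)
  qed
  show ?thesis
  proof (rule inj_onI)
    fix a b assume "a \<in> {..<255}" "b \<in> {..<255}" "X_pow a = X_pow b"
    then show "a = b" using neq[of a b] neq[of b a] by (cases a b rule: linorder_cases) auto
  qed
qed

lemma X_pow_nonzero: "X_pow k \<noteq> 0"
proof
  assume "X_pow k = 0"
  then have "X_pow ((255 - k mod 255) + k mod 255) = 0"
    by (simp only: X_pow_add X_pow_mod[symmetric] xor_linear_zero[OF xor_linear_mul_X_funpow])
  then show False using X_pow_255 by simp
qed

lemma X_pow_image: "X_pow ` {..<255} = {1..<256}"
proof (rule card_subset_eq)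
  show "X_pow ` {..<255} \<subseteq> {1..<256}"
    using X_pow_nonzero X_pow_less by (auto simp: Suc_le_eq)
  show "card (X_pow ` {..<255}) = card {1..<256::nat}"
    by (simp add: card_image[OF X_pow_inj])
qed simp

definition fibre :: "(nat \<Rightarrow> 'b) \<Rightarrow> 'b \<Rightarrow> nat set" where
  "fibre lab b = insert 0 (X_pow ` {e. e < 255 \<and> lab e = b})"

text \<open>For \<open>d\<close> dividing 255, \<open>coset d j = X^j K\<close> where \<open>K = {0} \<union> \<langle>X^d\<rangle>\<close>; \<open>K\<close> is
  \<open>F_16\<close> for \<open>d = 17\<close> and \<open>F_4\<close> for \<open>d = 85\<close>.\<close>

definition coset :: "nat \<Rightarrow> nat \<Rightarrow> nat set" where
  "coset d = fibre (\<lambda>e. e mod d)"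

lemma X_pow_mem_fibre:
  assumes "e < 255"
  shows "X_pow e \<in> fibre lab b \<longleftrightarrow> lab e = b"
proof
  assume "X_pow e \<in> fibre lab b"
  then obtain e' where "e' < 255" "lab e' = b" "X_pow e = X_pow e'"
    using X_pow_nonzero unfolding fibre_def by auto
  then show "lab e = b" using inj_onD[OF X_pow_inj] assms by fastforce
qed (use assms in \<open>auto simp: fibre_def\<close>)

lemma fibre_subset: "fibre lab b \<subseteq> {..<256}"
  unfolding fibre_def using X_pow_less by auto

lemma fibre_cong:
  assumes "\<And>e. e < 255 \<Longrightarrow> lab e = b \<longleftrightarrow> lab' e = b'"
  shows "fibre lab b = fibre lab' b'"
  unfolding fibre_def using assms by auto

lemma card_coset:
  assumes "d * m = 255" "j < d"
  shows "card (coset d j) = m + 1"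
proof -
  have "{e. e < 255 \<and> e mod d = j} = (\<lambda>t. j + d * t) ` {..<m}"
  proof (intro set_eqI iffI)
    fix e assume e: "e \<in> {e. e < 255 \<and> e mod d = j}"
    then have "e div d < m" using assms by (auto simp: div_less_iff_less_mult mult.commute)
    moreover have "e = j + d * (e div d)" using e mod_div_mult_eq[of e d] by (simp add: mult.commute)
    ultimately show "e \<in> (\<lambda>t. j + d * t) ` {..<m}" by blast
  next
    fix e assume "e \<in> (\<lambda>t. j + d * t) ` {..<m}"
    then obtain t where "t < m" "e = j + d * t" by blast
    moreover have "j + d * t < d * Suc t" using assms(2) by simp
    moreover have "d * Suc t \<le> d * m" using \<open>t < m\<close> by (intro mult_le_mono2) simp
    ultimately show "e \<in> {e. e < 255 \<and> e mod d = j}" using assms by auto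
  qed
  moreover have "inj_on (\<lambda>t. j + d * t) {..<m}" using assms(2) by (auto simp: inj_on_def)
  moreover have "inj_on X_pow {e. e < 255 \<and> e mod d = j}" by (rule inj_on_subset[OF X_pow_inj]) auto
  ultimately show ?thesis
    unfolding coset_def fibre_def using X_pow_nonzero by (simp add: card_image image_iff)
qed

lemma coset_eq_image:
  assumes "d dvd 255" "j < d"
  shows "coset d j = (mul_X ^^ j) ` coset d 0"
proof (intro equalityI subsetI)
  have zero: "(mul_X ^^ j) 0 = 0" by (rule xor_linear_zero[OF xor_linear_mul_X_funpow])
  have "0 \<in> coset d 0" by (simp add: coset_def fibre_def)
  fix x assume "x \<in> coset d j"
  then consider "x = 0" | e where "e < 255" "e mod d = j" "x = X_pow e"
    unfolding coset_def fibre_def by auto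
  then show "x \<in> (mul_X ^^ j) ` coset d 0"
  proof cases
    case 1
    then show ?thesis using zero \<open>0 \<in> coset d 0\<close> by (metis image_eqI)
  next
    case 2
    then have "x = (mul_X ^^ j) (X_pow (d * (e div d)))"
      using X_pow_add[of j "d * (e div d)"] mod_div_mult_eq[of e d] by (simp add: mult.commute)
    moreover have "d * (e div d) < 255" using 2 times_div_less_eq_dividend[of d e] by linarith
    ultimately show ?thesis unfolding coset_def fibre_def by fastforce
  qed
next
  fix x assume "x \<in> (mul_X ^^ j) ` coset d 0"
  then obtain y where y: "y \<in> coset d 0" "x = (mul_X ^^ j) y" by blast
  then consider "y = 0" | e where "e < 255" "e mod d = 0" "y = X_pow e"
    unfolding coset_def fibre_def by auto
  then show "x \<in> coset d j"
  proof cases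
    case 1
    then show ?thesis using y xor_linear_zero[OF xor_linear_mul_X_funpow]
      by (simp add: coset_def fibre_def)
  next
    case 2
    then have "x = X_pow ((j + e) mod 255)" using y X_pow_add[of j e] X_pow_mod[of "j + e"] by simp
    moreover have "(j + e) mod 255 mod d = (j + e mod d) mod d"
      using assms(1) by (simp add: mod_mod_cancel mod_add_right_eq)
    moreover have "(j + e mod d) mod d = j" using 2 assms(2) by simp
    ultimately show ?thesis unfolding coset_def fibre_def by auto
  qed
qed

lemma xor_closed_coset:
  assumes "d dvd 255" "xor_closed (coset d 0)"
  shows "xor_closed (coset d j)"
proof (cases "j < d")
  case True
  then show ?thesis
    using coset_eq_image[OF assms(1)] xor_closed_image[OF xor_linear_mul_X_funpow assms(2)]
    by metis
next
  case False
  have "d \<noteq> 0" using assms(1) by (metis dvd_0_left_iff zero_neq_numeral)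
  then have "coset d j = {0}" using False by (auto simp: coset_def fibre_def)
  then show ?thesis by (simp add: xor_closed_def)
qed

lemma coset_0_eq_xspan:
  assumes card: "d * (2 ^ length cs - 1) = 255"
    and one: "1 \<in> set cs"
    and invariant: "\<forall>c\<in>set cs. (mul_X ^^ d) c \<in> xspan cs"
  shows "coset d 0 = xspan cs"
proof (rule card_subset_eq)
  have powers: "X_pow (d * t) \<in> xspan cs" for t
  proof (induction t)
    case 0
    then show ?case using one cols_subset_xspan by (auto simp: X_pow_0)
  next
    case (Suc t)
    have "X_pow (d * Suc t) = (mul_X ^^ d) (X_pow (d * t))" by (simp flip: X_pow_add)
    then show ?case using xspan_invariant[OF xor_linear_mul_X_funpow invariant Suc] by simp
  qed
  show "coset d 0 \<subseteq> xspan cs"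
    unfolding coset_def fibre_def using powers xor_closed_xspan[of cs]
    by (auto simp: xor_closed_def elim!: dvdE simp flip: dvd_eq_mod_eq_0)
  show "finite (xspan cs)" by (simp add: xspan_def)
  have "d \<noteq> 0" using card by (metis mult_zero_left zero_neq_numeral)
  then have "card (coset d 0) = 2 ^ length cs" using card_coset[OF card] by simp
  then show "card (coset d 0) = card (xspan cs)"
    using card_xspan_le[of cs] card_mono[OF \<open>finite (xspan cs)\<close> \<open>coset d 0 \<subseteq> xspan cs\<close>]
    by simp
qed

lemma xor_mem_xspan:
  "a \<in> set cs \<Longrightarrow> b \<in> set cs \<Longrightarrow> xor a b \<in> xspan cs"
  using cols_subset_xspan[of cs] xor_closed_xspan[of cs] by (auto simp: xor_closed_def)

text \<open>\<open>X^17\<close> generates \<open>F_16^*\<close> and \<open>X^85\<close> generates \<open>F_4^*\<close>.\<close>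

lemma X_pow_68: "X_pow 68 = xor (X_pow 0) (X_pow 17)"
  by (simp add: X_pow_eval)

lemma X_pow_170: "X_pow 170 = xor (X_pow 0) (X_pow 85)"
  by (simp add: X_pow_eval)

lemma coset_17_0: "coset 17 0 = xspan (map X_pow [0, 17, 34, 51])"
proof (rule coset_0_eq_xspan)
  show "1 \<in> set (map X_pow [0, 17, 34, 51])" by (simp add: X_pow_0)
  show "\<forall>c\<in>set (map X_pow [0, 17, 34, 51]).
    (mul_X ^^ 17) c \<in> xspan (map X_pow [0, 17, 34, 51])"
    using cols_subset_xspan[of "map X_pow [0, 17, 34, 51]"] xor_mem_xspan[of "X_pow 0" _ "X_pow 17"]
    by (simp add: X_pow_add[symmetric] X_pow_68)
qed simp

lemma coset_85_0: "coset 85 0 = xspan (map X_pow [0, 85])"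
proof (rule coset_0_eq_xspan)
  show "1 \<in> set (map X_pow [0, 85])" by (simp add: X_pow_0)
  show "\<forall>c\<in>set (map X_pow [0, 85]). (mul_X ^^ 85) c \<in> xspan (map X_pow [0, 85])"
    using cols_subset_xspan[of "map X_pow [0, 85]"] xor_mem_xspan[of "X_pow 0" _ "X_pow 85"]
    by (simp add: X_pow_add[symmetric] X_pow_170)
qed simp

lemma xor_closed_coset_17: "xor_closed (coset 17 j)"
  by (rule xor_closed_coset) (simp_all add: coset_17_0 xor_closed_xspan)

lemma xor_closed_coset_85: "xor_closed (coset 85 j)"
  by (rule xor_closed_coset) (simp_all add: coset_85_0 xor_closed_xspan)

text \<open>\<open>W6 = F_4 + F_4 X + F_4 X^2\<close> is a 6-dimensional \<open>F_4\<close>-subspace.\<close>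

definition W6 :: "nat set" where
  "W6 = xspan (map X_pow [0, 85, 1, 86, 2, 87])"

lemma X_pow_add_170: "X_pow (k + 170) = xor (X_pow k) (X_pow (k + 85))"
proof -
  have "X_pow (k + 170) = (mul_X ^^ k) (xor (X_pow 0) (X_pow 85))" by (simp only: X_pow_add X_pow_170)
  also have "\<dots> = xor ((mul_X ^^ k) (X_pow 0)) ((mul_X ^^ k) (X_pow 85))"
    using xor_linear_mul_X_funpow by (simp add: xor_linear_def)
  finally show ?thesis by (simp add: X_pow_add[symmetric])
qed

lemma W6_mul_omega: "x \<in> W6 \<Longrightarrow> (mul_X ^^ 85) x \<in> W6"
  unfolding W6_def
proof (rule xspan_invariant[OF xor_linear_mul_X_funpow])
  show "\<forall>c\<in>set (map X_pow [0, 85, 1, 86, 2, 87]).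
    (mul_X ^^ 85) c \<in> xspan (map X_pow [0, 85, 1, 86, 2, 87])"
    using cols_subset_xspan[of "map X_pow [0, 85, 1, 86, 2, 87]"]
      xor_mem_xspan[of "X_pow 0" _ "X_pow 85"] xor_mem_xspan[of "X_pow 1" _ "X_pow 86"]
      xor_mem_xspan[of "X_pow 2" _ "X_pow 87"] X_pow_add_170[of 0] X_pow_add_170[of 1] X_pow_add_170[of 2]
    by (simp add: X_pow_add[symmetric])
qed

lemma card_W6: "card W6 = 64"
proof -
  have "map X_pow [0, 85, 1, 86, 2, 87] = [1, 214, 2, 177, 4, 127]"
    by (simp add: X_pow_eval)
  moreover have "\<forall>y\<in>{..<64}. lin_of_cols [1, 214, 2, 177, 4, 127] y = 0 \<longrightarrow> y = 0"
    by (simp only: lessThan_nat_numeral pred_numeral_simps BitM.simps ball_simps) simp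
  ultimately show ?thesis using card_xspan[of "[1, 214, 2, 177, 4, 127]"] by (simp add: W6_def)
qed

lemma X_pow_mem_W6_iff: "X_pow e \<in> W6 \<longleftrightarrow> X_pow (e mod 85) \<in> W6"
proof -
  have step: "X_pow (k + 85 * q) \<in> W6" if "X_pow k \<in> W6" for k q
  proof (induction q)
    case (Suc q)
    then show ?case using W6_mul_omega X_pow_add[of 85 "k + 85 * q"] by (simp add: algebra_simps)
  qed (simp add: that)
  have "X_pow (e mod 85) = X_pow (e mod 85 + 255 * (e div 85))"
    by (rule X_pow_periodic[OF X_pow_255, symmetric])
  also have "e mod 85 + 255 * (e div 85) = e + 85 * (2 * (e div 85))"
    using mod_div_mult_eq[of e 85] by linarith
  finally have "X_pow e \<in> W6 \<Longrightarrow> X_pow (e mod 85) \<in> W6" by (simp only: step)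
  moreover have "X_pow (e mod 85) \<in> W6 \<Longrightarrow> X_pow e \<in> W6"
    using step[of "e mod 85" "e div 85"] by simp
  ultimately show ?thesis by blast
qed

section \<open>Partitions from labellings of the nonzero elements\<close>

definition code_index :: "8 \<Rightarrow> nat" where
  "code_index = (SOME h. bij_betw h UNIV {..<8})"

definition enc :: "nat \<Rightarrow> F28" where
  "enc n = (\<chi> i. of_bool (bit n (code_index i)))"

lemma bij_code_index: "bij_betw code_index UNIV {..<8}"
proof -
  have "\<exists>h. bij_betw h (UNIV :: 8 set) {..<8::nat}"
    using ex_bij_betw_finite_nat[of "UNIV :: 8 set"] by (simp add: atLeast0LessThan)
  then show ?thesis unfolding code_index_def by (rule someI_ex)
qed

lemma enc_xor: "enc (xor a b) = enc a + enc b"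
  unfolding enc_def by (simp add: vec_eq_iff bit_xor_iff of_bool_def)

lemma enc_0: "enc 0 = 0"
  unfolding enc_def by (simp add: vec_eq_iff)

lemma inj_on_enc: "inj_on enc {..<256}"
proof (rule inj_onI)
  fix x y :: nat assume "x \<in> {..<256}" "y \<in> {..<256}" "enc x = enc y"
  show "x = y"
  proof (rule bit_eqI)
    fix k
    show "bit x k \<longleftrightarrow> bit y k"
    proof (cases "k < 8")
      case True
      then obtain i where "k = code_index i"
        using bij_code_index by (metis bij_betw_def imageE lessThan_iff)
      moreover have "enc x $ i = enc y $ i" using \<open>enc x = enc y\<close> by simp
      ultimately show ?thesis unfolding enc_def by (simp add: of_bool_eq_iff)
    next
      case False
      have "\<not> bit z k" if "z \<in> {..<256}" for z :: nat
      proof -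
        have "take_bit 8 z = z" using that by (simp add: take_bit_nat_eq_self_iff)
        then show ?thesis using False by (metis bit_take_bit_iff)
      qed
      then show ?thesis using \<open>x \<in> {..<256}\<close> \<open>y \<in> {..<256}\<close> by blast
    qed
  qed
qed

lemma enc_image: "enc ` {..<256} = UNIV"
  by (rule card_eq_UNIV_imp_eq_UNIV) (simp_all add: card_image[OF inj_on_enc] CARD_bit)

lemma subspace_enc_image:
  assumes "xor_closed A"
  shows "vec.subspace (enc ` A)"
  unfolding vec.subspace_def
proof (intro conjI ballI allI)
  show zero: "0 \<in> enc ` A" using assms enc_0 unfolding xor_closed_def by force
  fix x y assume "x \<in> enc ` A" "y \<in> enc ` A"
  then show "x + y \<in> enc ` A" using assms unfolding xor_closed_def by (auto simp flip: enc_xor)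
next
  fix c :: bit and x assume "x \<in> enc ` A"
  moreover have "0 \<in> enc ` A" using assms enc_0 unfolding xor_closed_def by force
  ultimately show "c *s x \<in> enc ` A" by (cases c) simp_all
qed

lemma dim_enc_image:
  assumes "xor_closed A" "A \<subseteq> {..<256}"
  shows "vec.dim (enc ` A) = d \<longleftrightarrow> card A = 2 ^ d"
proof -
  have "card A = 2 ^ vec.dim (enc ` A)"
    using card_subspace_F28[OF subspace_enc_image[OF assms(1)]]
      card_image[OF inj_on_subset[OF inj_on_enc assms(2)]] by simp
  then show ?thesis by simp
qed

text \<open>Every nonzero code is \<open>X^e\<close> for exactly one \<open>e < 255\<close>, so the fibres of any labelling of
  the exponents partition the nonzero codes.\<close>

definition labelled_partition :: "(nat \<Rightarrow> 'b) \<Rightarrow> F28 set set" where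
  "labelled_partition lab = (\<lambda>e. enc ` fibre lab (lab e)) ` {..<255}"

lemma enc_mem_fibre_iff:
  assumes "e < 255"
  shows "enc (X_pow e) \<in> enc ` fibre lab b \<longleftrightarrow> lab e = b"
proof -
  have "enc (X_pow e) \<in> enc ` fibre lab b \<longleftrightarrow> X_pow e \<in> fibre lab b"
    by (rule inj_on_image_mem_iff[OF inj_on_enc _ fibre_subset]) (simp add: X_pow_less)
  also have "\<dots> \<longleftrightarrow> lab e = b" by (rule X_pow_mem_fibre[OF assms])
  finally show ?thesis .
qed

lemma vector_space_partition_labelled:
  assumes closed: "\<And>e. e < 255 \<Longrightarrow> xor_closed (fibre lab (lab e))"
  shows "vector_space_partition (labelled_partition lab)"
  unfolding vector_space_partition_def labelled_partition_def
proof (intro conjI ballI allI impI)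
  fix V assume "V \<in> (\<lambda>e. enc ` fibre lab (lab e)) ` {..<255}"
  then obtain e where e: "e < 255" "V = enc ` fibre lab (lab e)" by blast
  then show "vec.subspace V" using subspace_enc_image[OF closed] by simp
  have "enc (X_pow e) \<in> V" using enc_mem_fibre_iff[OF e(1), of lab "lab e"] e(2) by simp
  moreover have "enc (X_pow e) \<noteq> 0"
    using inj_onD[OF inj_on_enc, of "X_pow e" 0] enc_0 X_pow_nonzero X_pow_less by auto
  ultimately show "V \<noteq> {0}" by blast
next
  fix v :: F28 assume "v \<noteq> 0"
  obtain n where n: "n < 256" "v = enc n" using enc_image by (metis UNIV_I imageE lessThan_iff)
  then have "n \<in> X_pow ` {..<255}" unfolding X_pow_image using \<open>v \<noteq> 0\<close> enc_0 by (cases n) auto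
  then obtain e where e: "e < 255" "v = enc (X_pow e)" using n by auto
  show "\<exists>!V. V \<in> (\<lambda>e. enc ` fibre lab (lab e)) ` {..<255} \<and> v \<in> V"
  proof (rule ex1I)
    show "enc ` fibre lab (lab e) \<in> (\<lambda>e. enc ` fibre lab (lab e)) ` {..<255} \<and>
      v \<in> enc ` fibre lab (lab e)"
      using e enc_mem_fibre_iff[OF e(1), of lab "lab e"] by auto
    fix V assume "V \<in> (\<lambda>e. enc ` fibre lab (lab e)) ` {..<255} \<and> v \<in> V"
    then obtain e' where "V = enc ` fibre lab (lab e')" "v \<in> V" by blast
    then show "V = enc ` fibre lab (lab e)" using e enc_mem_fibre_iff[OF e(1), of lab "lab e'"] by simp
  qed
qed

lemma num_dim_labelled_partition:
  assumes closed: "\<And>e. e < 255 \<Longrightarrow> xor_closed (fibre lab (lab e))"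
  shows "num_dim (labelled_partition lab) d =
    card (lab ` {e. e < 255 \<and> card (fibre lab (lab e)) = 2 ^ d})"
proof -
  let ?V = "\<lambda>b. enc ` fibre lab b"
  have dims: "{V \<in> labelled_partition lab. vec.dim V = d} =
    ?V ` lab ` {e. e < 255 \<and> card (fibre lab (lab e)) = 2 ^ d}"
    unfolding labelled_partition_def using dim_enc_image[OF closed fibre_subset] by auto
  have "inj_on ?V (lab ` {..<255})"
  proof (rule inj_onI)
    fix b b' assume "b \<in> lab ` {..<255}" "b' \<in> lab ` {..<255}" "?V b = ?V b'"
    then obtain e where "e < 255" "b = lab e" by blast
    then have "enc (X_pow e) \<in> ?V b'" using \<open>?V b = ?V b'\<close> enc_mem_fibre_iff[of e lab b] by simp
    then show "b = b'" using \<open>e < 255\<close> \<open>b = lab e\<close> enc_mem_fibre_iff[of e lab b'] by simp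
  qed
  then have "inj_on ?V (lab ` {e. e < 255 \<and> card (fibre lab (lab e)) = 2 ^ d})"
    by (rule inj_on_subset) auto
  then show ?thesis unfolding num_dim_def dims by (rule card_image)
qed

lemma fibre_mem_label:
  assumes "A \<subseteq> {..<256}" "0 \<in> A"
  shows "fibre (\<lambda>e. X_pow e \<in> A) True = A"
proof (intro equalityI subsetI)
  fix x assume "x \<in> A"
  show "x \<in> fibre (\<lambda>e. X_pow e \<in> A) True"
  proof (cases "x = 0")
    case False
    then have "x \<in> X_pow ` {..<255}" unfolding X_pow_image using \<open>x \<in> A\<close> assms(1) by auto
    then obtain e where "e < 255" "x = X_pow e" by blast
    then show ?thesis using \<open>x \<in> A\<close> X_pow_mem_fibre[of e "\<lambda>e. X_pow e \<in> A" True] by simp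
  qed (simp add: fibre_def)
qed (use assms(2) in \<open>auto simp: fibre_def\<close>)

text \<open>Keep the cosets \<open>X^j F_16\<close> with \<open>i \<le> j < 17\<close> and split each of the other \<open>i\<close> into its
  five cosets of \<open>F_4\<close>.\<close>

definition mixed_spread_label :: "nat \<Rightarrow> nat \<Rightarrow> nat + nat" where
  "mixed_spread_label i e = (if i \<le> e mod 17 then Inl (e mod 17) else Inr (e mod 85))"

lemma fibre_mixed_spread_label:
  "fibre (mixed_spread_label i) (mixed_spread_label i e) =
    (if i \<le> e mod 17 then coset 17 (e mod 17) else coset 85 (e mod 85))"
proof (cases "i \<le> e mod 17")
  case True
  have "fibre (mixed_spread_label i) (Inl (e mod 17)) = coset 17 (e mod 17)"
    unfolding coset_def by (rule fibre_cong) (use True in \<open>auto simp: mixed_spread_label_def\<close>)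
  then show ?thesis using True by (simp add: mixed_spread_label_def)
next
  case False
  have "fibre (mixed_spread_label i) (Inr (e mod 85)) = coset 85 (e mod 85)"
    unfolding coset_def
  proof (rule fibre_cong)
    fix e' :: nat
    have "e' mod 85 = e mod 85 \<Longrightarrow> e' mod 17 = e mod 17"
      using mod_mod_cancel[of 17 85 e'] mod_mod_cancel[of 17 85 e] by simp
    then show "mixed_spread_label i e' = Inr (e mod 85) \<longleftrightarrow> e' mod 85 = e mod 85"
      using False by (auto simp: mixed_spread_label_def)
  qed
  then show ?thesis using False by (simp add: mixed_spread_label_def)
qed

text \<open>As \<open>W6\<close> is an \<open>F_4\<close>-subspace, each coset of \<open>F_4\<close> lies in \<open>W6\<close> or meets it only
  in 0.\<close>

definition W6_label :: "nat \<Rightarrow> nat option" where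
  "W6_label e = (if X_pow e \<in> W6 then None else Some (e mod 85))"

lemma fibre_W6_label:
  "fibre W6_label (W6_label e) = (if X_pow e \<in> W6 then W6 else coset 85 (e mod 85))"
proof (cases "X_pow e \<in> W6")
  case True
  have "W6 \<subseteq> {..<256}" unfolding W6_def using xspan_less[of _ 8] X_pow_less by auto
  moreover have "0 \<in> W6" using xor_closed_xspan by (simp add: W6_def xor_closed_def)
  moreover have "fibre W6_label (W6_label e) = fibre (\<lambda>e. X_pow e \<in> W6) True"
    using True by (auto intro!: fibre_cong simp: W6_label_def split: if_splits)
  ultimately show ?thesis using True fibre_mem_label by simp
next
  case False
  have "fibre W6_label (Some (e mod 85)) = coset 85 (e mod 85)"
    unfolding coset_def
  proof (rule fibre_cong)
    fix e' :: nat
    have "e' mod 85 = e mod 85 \<Longrightarrow> X_pow e' \<notin> W6"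
      using False X_pow_mem_W6_iff[of e'] X_pow_mem_W6_iff[of e] by simp
    then show "W6_label e' = Some (e mod 85) \<longleftrightarrow> e' mod 85 = e mod 85"
      by (auto simp: W6_label_def)
  qed
  then show ?thesis using False by (simp add: W6_label_def)
qed

lemma exists_type_8: "\<exists>P. vector_space_partition P \<and> has_type P type_8"
proof (intro exI conjI)
  have "enc 1 \<noteq> 0" using inj_onD[OF inj_on_enc, of 1 0] enc_0 by auto
  then have "(UNIV :: F28 set) \<noteq> {0}" by auto
  then show "vector_space_partition {UNIV :: F28 set}"
    unfolding vector_space_partition_def using vec.subspace_UNIV by auto
  have "vec.dim (UNIV :: F28 set) = 8" using vec_dim_card[where 'a = bit and 'n = 8] by simp
  then have "{V \<in> {UNIV :: F28 set}. vec.dim V = d} = (if d = 8 then {UNIV} else {})" for d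
    by auto
  then show "has_type {UNIV} type_8" by (simp add: has_type_def num_dim_def type_8_def)
qed

lemma exists_type_2_64_6_1: "\<exists>P. vector_space_partition P \<and> has_type P type_2_64_6_1"
proof (intro exI conjI)
  let ?P = "labelled_partition W6_label"
  have card: "card (fibre W6_label (W6_label e)) = (if X_pow e \<in> W6 then 2 ^ 6 else 2 ^ 2)" for e
    using fibre_W6_label[of e] card_W6 card_coset[of 85 3 "e mod 85"] by simp
  have closed: "xor_closed (fibre W6_label (W6_label e))" for e
    using fibre_W6_label[of e] xor_closed_xspan xor_closed_coset_85 by (simp add: W6_def)
  show P: "vector_space_partition ?P" by (rule vector_space_partition_labelled[OF closed])
  have even: "\<forall>V\<in>?P. even (vec.dim V)"
  proof
    fix V assume "V \<in> ?P"
    then obtain e where "V = enc ` fibre W6_label (W6_label e)" unfolding labelled_partition_def by blast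
    then have "vec.dim V = (if X_pow e \<in> W6 then 6 else 2)"
      using dim_enc_image[OF closed fibre_subset] card by simp
    then show "even (vec.dim V)" by simp
  qed
  note num_dim = num_dim_labelled_partition[OF closed]
  have "X_pow 0 \<in> W6" using cols_subset_xspan by (force simp: W6_def)
  have "{e. e < 255 \<and> card (fibre W6_label (W6_label e)) = 2 ^ 6} =
    {e. e < 255 \<and> X_pow e \<in> W6}"
    using card by auto
  moreover have "W6_label ` {e. e < 255 \<and> X_pow e \<in> W6} = {None}"
  proof -
    have "W6_label ` {e. e < 255 \<and> X_pow e \<in> W6} =
      (\<lambda>_. None) ` {e. e < 255 \<and> X_pow e \<in> W6}"
      by (rule image_cong) (simp_all add: W6_label_def)
    also have "\<dots> = {None}"
      using \<open>X_pow 0 \<in> W6\<close> image_constant[of 0 "{e. e < 255 \<and> X_pow e \<in> W6}" None] by simp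
    finally show ?thesis .
  qed
  ultimately have "num_dim ?P 6 = 1" using num_dim by simp
  moreover have "num_dim ?P 4 = 0" "num_dim ?P 8 = 0" using num_dim card by simp_all
  ultimately show "has_type ?P type_2_64_6_1"
    by (intro even_partition_has_typeI[OF P even]) (simp_all add: type_2_64_6_1_def)
qed

lemma exists_type_2_4:
  assumes "i \<le> 17"
  shows "\<exists>P. vector_space_partition P \<and> has_type P (type_2_4 i)"
proof (intro exI conjI)
  let ?lab = "mixed_spread_label i"
  let ?P = "labelled_partition ?lab"
  have card: "card (fibre ?lab (?lab e)) = (if i \<le> e mod 17 then 2 ^ 4 else 2 ^ 2)" for e
    using fibre_mixed_spread_label[of i e] card_coset[of 17 15 "e mod 17"] card_coset[of 85 3 "e mod 85"]
    by simp
  have closed: "xor_closed (fibre ?lab (?lab e))" for e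
    using fibre_mixed_spread_label[of i e] xor_closed_coset_17 xor_closed_coset_85 by simp
  show P: "vector_space_partition ?P" by (rule vector_space_partition_labelled[OF closed])
  have even: "\<forall>V\<in>?P. even (vec.dim V)"
  proof
    fix V assume "V \<in> ?P"
    then obtain e where "V = enc ` fibre ?lab (?lab e)" unfolding labelled_partition_def by blast
    then have "vec.dim V = (if i \<le> e mod 17 then 4 else 2)"
      using dim_enc_image[OF closed fibre_subset] card by simp
    then show "even (vec.dim V)" by simp
  qed
  note num_dim = num_dim_labelled_partition[OF closed]
  have "?lab ` {e. e < 255 \<and> card (fibre ?lab (?lab e)) = 2 ^ 4} = Inl ` {i..<17}"
  proof -
    have "?lab ` {e. e < 255 \<and> card (fibre ?lab (?lab e)) = 2 ^ 4} =
      ?lab ` {e. e < 255 \<and> i \<le> e mod 17}"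
      using card by auto
    also have "\<dots> = Inl ` (\<lambda>e. e mod 17) ` {e. e < 255 \<and> i \<le> e mod 17}"
      unfolding image_image by (rule image_cong) (simp_all add: mixed_spread_label_def)
    also have "(\<lambda>e. e mod 17) ` {e. e < 255 \<and> i \<le> e mod 17} = {i..<17}"
    proof (intro equalityI subsetI)
      fix j assume "j \<in> {i..<17}"
      then show "j \<in> (\<lambda>e. e mod 17) ` {e. e < 255 \<and> i \<le> e mod 17}" by (intro image_eqI[of j _ j]) auto
    qed auto
    finally show ?thesis .
  qed
  then have "num_dim ?P 4 = 17 - i" using num_dim by (simp add: card_image)
  moreover have "num_dim ?P 6 = 0" "num_dim ?P 8 = 0" using num_dim card by simp_all
  ultimately show "has_type ?P (type_2_4 i)"
    using assms by (intro even_partition_has_typeI[OF P even]) (simp_all add: type_2_4_def)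
qed

theorem mainTheorem10:
  shows "(\<forall>P. vector_space_partition P \<and> (\<forall>V\<in>P. even (vec.dim V)) \<longrightarrow>
            has_type P type_8 \<or> has_type P type_2_64_6_1 \<or>
            (\<exists>i\<le>17. has_type P (type_2_4 i))) \<and>
         (\<exists>P. vector_space_partition P \<and> has_type P type_8) \<and>
         (\<exists>P. vector_space_partition P \<and> has_type P type_2_64_6_1) \<and>
         (\<forall>i\<le>17. \<exists>P. vector_space_partition P \<and> has_type P (type_2_4 i))"
  using even_partition_type exists_type_8 exists_type_2_64_6_1 exists_type_2_4 by blast

end
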